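(* Let $X$ be a finite-dimensional real vector space, $Y=X^*$ its dual, $N=X\times Y$ endowed with a Lebesgue measure $dz$ and the symplectic form $\omega$ described in the context. Let $H:[0,T]\times N\to\mathbb{R}$ be a smooth (time-dependent) hamiltonian, let $\phi:N\to\mathbb{R}\cup\{+\infty\}$ be a convex lower semicontinuous dissipation potential, let $F:N\to N$ be a map, and let $\alpha\in\mathbb{R}$, $\beta>0$. Let $\Psi\in Paths(H,F)$ and let $B\subset N$ be a Borel set; assume that the integrals below are well defined and that differentiation in $t$ may be exchanged with integration over $B$ (e.g. $B$ bounded and $\Psi,\partial_t\Psi$ jointly continuous). Then $$\mu(H,F)(B)-\mu(H,id)(B)\;\le\;\beta\,C(\Psi)(B).$$ Moreover, when $C(\Psi)(B)<+\infty$, equality holds if and only if for almost every $z\in B$ and $t\in[0,T]$ $$\omega\big(\dot\Psi_D(t,z),\dot\Psi(t,z)\big)=\phi(\dot\Psi(t,z))+\phi^{*\omega}(\dot\Psi_D(t,z)),$$ equivalently $\dot\Psi_D(t,z)\in\partial^{\omega}\phi(\dot\Psi(t,z))$ (the SBEN principle). Consequently, the minimal dissipation cost $C(\cdot)(B)$ over $Paths(H,F)$ is attained by any flow $\Psi\in Paths(H,F)$ satisfying $\dot\Psi_D(t,z)\in\partial^{\omega}\phi(\dot\Psi(t,z))$ for a.e. $z\in B$, $t\in[0,T]$.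
   Context: Notation: $\langle q,p\rangle$ denotes the duality pairing of $q\in X$, $p\in Y$. $N^*=Y\times X$ is dual to $N=X\times Y$ via $\langle\langle (p_1,q_1),(q_2,p_2)\rangle\rangle=\langle q_1,p_2\rangle+\langle q_2,p_1\rangle$. Define $J:N\to N^*$, $J(q,p)=(-p,q)$ and $J^*:N^*\to N$, $J^*(p,q)=(-q,p)$. The symplectic form on $N$ is $\omega(z_1,z_2)=\langle\langle Jz_1,z_2\rangle\rangle=\langle q_1,p_2\rangle-\langle q_2,p_1\rangle$ for $z_i=(q_i,p_i)$. For differentiable $H$, $DH(t,z)\in N^*$ is the gradient in $z$ and the symplectic gradient is $XH(t,z)=-J^*DH(t,z)\in N$ (i.e. $XH=(D_pH,-D_qH)$). For convex lsc $\Phi:N\to\mathbb{R}\cup\{+\infty\}$: the symplectic subdifferential at $z$ with $\Phi(z)<\infty$ is $\partial^\omega\Phi(z)=\{z'\in N:\ \Phi(z+z'')\ge\Phi(z)+\omega(z',z'')\ \forall z''\in N\}$; the symplectic Fenchel conjugate is $\Phi^{*\omega}(z')=\sup_{z\in N}\{\omega(z',z)-\Phi(z)\}$. (Symplectic Fenchel inequality: $\Phi(z)+\Phi^{*\omega}(z')\ge\omega(z',z)$, with equality iff $z'\in\partial^\omega\Phi(z)$.) $Paths(H,F)$ is the set of maps $\Psi:[0,T]\times N\to N$, smooth in $t$, with $\Psi(0,z)=z$ and $\Psi(T,z)=F(z)$ for all $z\in N$. For such $\Psi$, write $\dot\Psi=\partial_t\Psi$ and $\dot\Psi_D(t,z)=\dot\Psi(t,z)-XH(t,\Psi(t,z))$.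 Gibbs measures: for $\Psi\in Paths(H,F)$ and $t\in[0,T]$, $\mu_t(B)=\int_B \exp[-(\alpha+\beta H(t,\Psi(t,z)))]\,dz$ for Borel $B$; in particular $\mu(H,id)(B):=\mu_0(B)=\int_B\exp[-(\alpha+\beta H(0,z))]dz$ and $\mu(H,F)(B):=\mu_T(B)=\int_B\exp[-(\alpha+\beta H(T,F(z)))]dz$. Dissipation cost of $\Psi$ over $B$: $C(\Psi)(B)=\int_0^T\int_B\Big[\phi(\dot\Psi(t,z))+\phi^{*\omega}(\dot\Psi_D(t,z))-\frac{\partial H}{\partial t}(t,\Psi(t,z))\Big]\,d\mu_t(z)\,dt$. *)

theory Defs
  imports "HOL-Analysis.Analysis" "HOL-Probability.Probability"
begin

text \<open>X is a finite-dimensional real vector space 'a::euclidean_space;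
  its dual Y = X* is identified with 'a via the inner product, so the duality pairing
  <q,p> is q \<bullet> p. Elements of N* = Y \<times> X are pairs (p,q) :: 'a \<times> 'a as well.\<close>

definition dual_pair :: "('a::real_inner \<times> 'a) \<Rightarrow> ('a \<times> 'a) \<Rightarrow> real" where
  "dual_pair w z = snd w \<bullet> snd z + fst z \<bullet> fst w"

definition Jmap :: "('a::real_vector \<times> 'a) \<Rightarrow> ('a \<times> 'a)" where
  "Jmap z = (- snd z, fst z)"

definition Jstar :: "('a::real_vector \<times> 'a) \<Rightarrow> ('a \<times> 'a)" where
  "Jstar w = (- snd w, fst w)"

definition omega :: "('a::real_inner \<times> 'a) \<Rightarrow> ('a \<times> 'a) \<Rightarrow> real" where
  "omega z1 z2 = dual_pair (Jmap z1) z2"  \<comment> \<open>= <q1,p2> - <q2,p1>\<close>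

definition symp_grad :: "(real \<Rightarrow> 'a::real_vector \<times> 'a \<Rightarrow> 'a \<times> 'a) \<Rightarrow> real \<Rightarrow> 'a \<times> 'a \<Rightarrow> 'a \<times> 'a" where
  "symp_grad DH t z = - Jstar (DH t z)"

definition hamiltonian_C1 ::
  "real \<Rightarrow> (real \<Rightarrow> 'a::euclidean_space \<times> 'a \<Rightarrow> real) \<Rightarrow> (real \<Rightarrow> 'a \<times> 'a \<Rightarrow> real)
     \<Rightarrow> (real \<Rightarrow> 'a \<times> 'a \<Rightarrow> 'a \<times> 'a) \<Rightarrow> bool" where
  "hamiltonian_C1 T H dtH DH \<longleftrightarrow>
     (\<forall>t\<in>{0..T}. \<forall>z. ((\<lambda>(s, w). H s w) has_derivative
         (\<lambda>(ds, dz). ds * dtH t z + dual_pair (DH t z) dz)) (at (t, z) within {0..T} \<times> UNIV))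
   \<and> continuous_on ({0..T} \<times> UNIV) (\<lambda>(t, z). dtH t z)
   \<and> continuous_on ({0..T} \<times> UNIV) (\<lambda>(t, z). DH t z)"

definition ereal_convex :: "('b::real_vector \<Rightarrow> ereal) \<Rightarrow> bool" where
  "ereal_convex f \<longleftrightarrow> convex {(x, c::real). f x \<le> ereal c}"

definition ereal_lsc :: "('b::topological_space \<Rightarrow> ereal) \<Rightarrow> bool" where
  "ereal_lsc f \<longleftrightarrow> (\<forall>c::ereal. closed {x. f x \<le> c})"

definition symp_conj :: "('a::real_inner \<times> 'a \<Rightarrow> ereal) \<Rightarrow> 'a \<times> 'a \<Rightarrow> ereal" where
  "symp_conj \<phi> z' = (SUP z. ereal (omega z' z) - \<phi> z)"

definition symp_subdiff :: "('a::real_inner \<times> 'a \<Rightarrow> ereal) \<Rightarrow> 'a \<times> 'a \<Rightarrow> ('a \<times> 'a) set" where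
  "symp_subdiff \<phi> z = {z'. \<phi> z < \<infinity> \<and> (\<forall>z''. \<phi> (z + z'') \<ge> \<phi> z + ereal (omega z' z''))}"

definition paths :: "real \<Rightarrow> ('b \<Rightarrow> 'b) \<Rightarrow> (real \<Rightarrow> 'b \<Rightarrow> 'b::real_normed_vector)
     \<Rightarrow> (real \<Rightarrow> 'b \<Rightarrow> 'b) \<Rightarrow> bool" where
  "paths T F \<Psi> \<Psi>' \<longleftrightarrow>
     (\<forall>z. \<Psi> 0 z = z \<and> \<Psi> T z = F z)
   \<and> (\<forall>z. \<forall>t\<in>{0..T}. ((\<lambda>s. \<Psi> s z) has_vector_derivative \<Psi>' t z) (at t within {0..T}))
   \<and> (\<forall>z. continuous_on {0..T} (\<lambda>t. \<Psi>' t z))"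

definition gibbs :: "(real \<Rightarrow> 'b::euclidean_space \<Rightarrow> real) \<Rightarrow> real \<Rightarrow> real \<Rightarrow> real
     \<Rightarrow> ('b \<Rightarrow> 'b) \<Rightarrow> 'b measure" where
  "gibbs H \<alpha> \<beta> t G = density lborel (\<lambda>z. ennreal (exp (- (\<alpha> + \<beta> * H t (G z)))))"

definition eint_on :: "'b measure \<Rightarrow> 'b set \<Rightarrow> ('b \<Rightarrow> ereal) \<Rightarrow> ereal" where
  "eint_on M A f = enn2ereal (\<integral>\<^sup>+x\<in>A. e2ennreal (f x) \<partial>M)
                 - enn2ereal (\<integral>\<^sup>+x\<in>A. e2ennreal (- f x) \<partial>M)"

definition cost :: "real \<Rightarrow> (real \<Rightarrow> 'a::euclidean_space \<times> 'a \<Rightarrow> real) \<Rightarrow> (real \<Rightarrow> 'a \<times> 'a \<Rightarrow> real)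
     \<Rightarrow> (real \<Rightarrow> 'a \<times> 'a \<Rightarrow> 'a \<times> 'a) \<Rightarrow> ('a \<times> 'a \<Rightarrow> ereal) \<Rightarrow> real \<Rightarrow> real
     \<Rightarrow> (real \<Rightarrow> 'a \<times> 'a \<Rightarrow> 'a \<times> 'a) \<Rightarrow> (real \<Rightarrow> 'a \<times> 'a \<Rightarrow> 'a \<times> 'a) \<Rightarrow> ('a \<times> 'a) set \<Rightarrow> ereal" where
  "cost T H dtH DH \<phi> \<alpha> \<beta> \<Psi> \<Psi>' B =
     eint_on lborel {0..T} (\<lambda>t. eint_on (gibbs H \<alpha> \<beta> t (\<Psi> t)) B
        (\<lambda>z. \<phi> (\<Psi>' t z) + symp_conj \<phi> (\<Psi>' t z - symp_grad DH t (\<Psi> t z)) - ereal (dtH t (\<Psi> t z))))"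

text \<open>Regularity allowing differentiation under the integral sign: joint continuity of \<Psi>, \<Psi>'.\<close>
definition path_regular :: "real \<Rightarrow> (real \<Rightarrow> 'b \<Rightarrow> 'b::real_normed_vector) \<Rightarrow> (real \<Rightarrow> 'b \<Rightarrow> 'b) \<Rightarrow> bool" where
  "path_regular T \<Psi> \<Psi>' \<longleftrightarrow>
     continuous_on ({0..T} \<times> UNIV) (\<lambda>(t, z). \<Psi> t z) \<and> continuous_on ({0..T} \<times> UNIV) (\<lambda>(t, z). \<Psi>' t z)"

end

theory Submission
  imports Defs
begin

text \<open>Along a path \<open>\<Psi>\<close> the Gibbs weight \<open>\<rho>(t, z) = exp (-(\<alpha> + \<beta> H(t, \<Psi>(t, z))))\<close> satisfies
  \<open>\<partial>\<^sub>t \<rho> = \<beta> r \<rho>\<close> with energy loss rate \<open>r = -(\<partial>\<^sub>t H + \<langle>DH, \<Psi>'\<rangle>)\<close>. As \<open>XH = -J\<^sup>* DH\<close>, we have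
  \<open>\<omega>(\<Psi>'\<^sub>D, \<Psi>') = -\<langle>DH, \<Psi>'\<rangle>\<close>, so the integrand of the cost splits as \<open>r\<close> plus the Fenchel gap
  \<open>\<phi>(\<Psi>') + \<phi>\<^sup>*\<^sup>\<omega>(\<Psi>'\<^sub>D) - \<omega>(\<Psi>'\<^sub>D, \<Psi>')\<close>, which is nonnegative by the symplectic Fenchel inequality.
  Integrating \<open>r\<close> against \<open>\<mu>\<^sub>t\<close> over \<open>[0, T] \<times> B\<close> gives, by Fubini and the fundamental theorem of
  calculus, \<open>(\<mu>(H, F)(B) - \<mu>(H, id)(B)) / \<beta>\<close>. Hence \<open>\<beta> C(\<Psi>)(B)\<close> exceeds the increase of the Gibbs
  measure by \<open>\<beta>\<close> times the integrated gap, which vanishes iff the gap vanishes almost everywhere,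
  i.e. iff \<open>\<Psi>'\<^sub>D \<in> \<partial>\<^sup>\<omega>\<phi>(\<Psi>')\<close> a.e. The increase does not depend on the path, so such paths have
  minimal cost.\<close>

section \<open>Symplectic Fenchel duality\<close>

lemma omega_add_right: "omega z' (z + w) = omega z' z + omega z' (w::'a::real_inner \<times> 'a)"
  by (simp add: omega_def dual_pair_def Jmap_def inner_add_left inner_add_right)

lemma omega_diff_right: "omega z' (w - z) = omega z' w - omega z' (z::'a::real_inner \<times> 'a)"
  by (simp add: omega_def dual_pair_def Jmap_def inner_diff_left inner_diff_right)

lemma omega_diff_symp_grad:
  "omega (v - symp_grad DH t x) v = - dual_pair (DH t x) (v::'a::real_inner \<times> 'a)"
  by (simp add: omega_def dual_pair_def Jmap_def symp_grad_def Jstar_def inner_diff_left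
      inner_diff_right inner_commute algebra_simps)

lemma dual_pair_scaleR_right: "dual_pair w (h *\<^sub>R v) = h * dual_pair w (v::'a::real_inner \<times> 'a)"
  by (simp add: dual_pair_def algebra_simps)

lemma omega_le_symp_conj: "ereal (omega z' z) - \<phi> z \<le> symp_conj \<phi> z'"
  unfolding symp_conj_def by (rule SUP_upper) simp

lemma symp_fenchel_ineq:
  assumes "\<phi> z \<noteq> - \<infinity>"
  shows "ereal (omega z' z) \<le> \<phi> z + symp_conj \<phi> z'"
  using omega_le_symp_conj[of z' z \<phi>] assms
  by (cases "\<phi> z"; cases "symp_conj \<phi> z'") auto

lemma symp_fenchel_eq_iff_subdiff:
  assumes not_minf: "\<And>z. \<phi> z \<noteq> - \<infinity>"
  shows "ereal (omega z' z) = \<phi> z + symp_conj \<phi> z' \<longleftrightarrow> z' \<in> symp_subdiff \<phi> z"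
proof
  assume eq: "ereal (omega z' z) = \<phi> z + symp_conj \<phi> z'"
  then obtain a where a: "\<phi> z = ereal a" using not_minf[of z] by (cases "\<phi> z") auto
  have conj: "symp_conj \<phi> z' = ereal (omega z' z - a)"
    using eq a by (cases "symp_conj \<phi> z'") auto
  show "z' \<in> symp_subdiff \<phi> z"
    unfolding symp_subdiff_def
  proof safe
    show "\<phi> z < \<infinity>" using a by simp
    fix z''
    have "ereal (omega z' z + omega z' z'') - \<phi> (z + z'') \<le> ereal (omega z' z - a)"
      using omega_le_symp_conj[of z' "z + z''" \<phi>] conj by (simp add: omega_add_right)
    then show "\<phi> z + ereal (omega z' z'') \<le> \<phi> (z + z'')"
      using a not_minf[of "z + z''"] by (cases "\<phi> (z + z'')") auto
  qed
next
  assume "z' \<in> symp_subdiff \<phi> z"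
  then have "\<phi> z < \<infinity>" and sub: "\<And>z''. \<phi> z + ereal (omega z' z'') \<le> \<phi> (z + z'')"
    unfolding symp_subdiff_def by auto
  then obtain a where a: "\<phi> z = ereal a" using not_minf[of z] by (cases "\<phi> z") auto
  have "symp_conj \<phi> z' \<le> ereal (omega z' z - a)"
    unfolding symp_conj_def
  proof (rule SUP_least)
    fix w
    have "ereal (a + omega z' w - omega z' z) \<le> \<phi> w"
      using sub[of "w - z"] a by (simp add: omega_diff_right add_diff_eq)
    then show "ereal (omega z' w) - \<phi> w \<le> ereal (omega z' z - a)"
      using not_minf[of w] by (cases "\<phi> w") auto
  qed
  with omega_le_symp_conj[of z' z \<phi>] a have "symp_conj \<phi> z' = ereal (omega z' z - a)"
    by simp
  then show "ereal (omega z' z) = \<phi> z + symp_conj \<phi> z'" using a by simp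
qed

section \<open>Lower semicontinuity and measurability\<close>

lemma borel_measurable_ereal_lsc:
  fixes f :: "'b::topological_space \<Rightarrow> ereal"
  assumes "ereal_lsc f"
  shows "f \<in> borel_measurable borel"
proof (rule borel_measurableI_le)
  fix y
  have "closed {x. f x \<le> y}" using assms unfolding ereal_lsc_def by blast
  then show "{x \<in> space borel. f x \<le> y} \<in> sets borel" by simp
qed

lemma ereal_lsc_symp_conj: "ereal_lsc (symp_conj \<phi>)"
  unfolding ereal_lsc_def
proof
  fix c :: ereal
  have sublevel: "{x. symp_conj \<phi> x \<le> c} = (\<Inter>z. {x. ereal (omega x z) - \<phi> z \<le> c})"
    unfolding symp_conj_def by (auto simp: SUP_le_iff)
  have "closed {x. ereal (omega x z) - \<phi> z \<le> c}" for z
  proof (cases "\<phi> z")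
    case (real r)
    have "continuous_on UNIV (\<lambda>x. ereal (omega x z - r))"
      unfolding omega_def dual_pair_def Jmap_def
      by (intro continuous_on_compose2[OF continuous_on_ereal[OF continuous_on_id]]
          continuous_intros) auto
    then have "closed {x. ereal (omega x z - r) \<le> c}"
      by (intro closed_Collect_le) auto
    then show ?thesis using real by simp
  qed auto
  then show "closed {x. symp_conj \<phi> x \<le> c}" unfolding sublevel by (intro closed_INT) auto
qed

section \<open>Integrals of extended-real functions\<close>

lemma e2ennreal_add_nonneg_split:
  fixes g :: real and h :: ereal
  assumes "0 \<le> h"
  shows "e2ennreal (ereal g + h) + ennreal (- g)
    = e2ennreal (- (ereal g + h)) + ennreal g + e2ennreal h"
proof (cases h)
  case (real r)
  have pos_part: "enn2ereal (ennreal x) = ereal (max 0 x)" for x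
    by (cases "0 \<le> x") (auto simp: ennreal_neg zero_ennreal.rep_eq)
  have "enn2ereal (ennreal (g + r) + ennreal (- g))
      = enn2ereal (ennreal (- g - r) + ennreal g + ennreal r)"
    using real assms by (simp add: plus_ennreal.rep_eq pos_part max_def)
  then show ?thesis using real by (simp add: enn2ereal_inject)
qed (use assms in auto)

lemma enn2ereal_diff_eq_of_add_eq:
  fixes P Q Gp Gm Hh :: ennreal
  assumes sum: "P + Gm = Q + Gp + Hh" and fin: "Q < top" "Gp < top" "Gm < top"
  shows "enn2ereal P - enn2ereal Q = ereal (enn2real Gp - enn2real Gm) + enn2ereal Hh"
proof -
  have "enn2ereal P + enn2ereal Gm = enn2ereal Q + enn2ereal Gp + enn2ereal Hh"
    using arg_cong[OF sum, of enn2ereal] by (simp add: plus_ennreal.rep_eq)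
  moreover have "enn2ereal Q = ereal (enn2real Q)" "enn2ereal Gp = ereal (enn2real Gp)"
    "enn2ereal Gm = ereal (enn2real Gm)"
    using fin by (auto simp: enn2ereal_ennreal less_top_ennreal)
  ultimately show ?thesis
    using enn2ereal_nonneg[of P] enn2ereal_nonneg[of Hh]
    by (cases "enn2ereal P"; cases "enn2ereal Hh") auto
qed

lemma ereal_diff_eq_0_iff: "x - ereal a = 0 \<longleftrightarrow> ereal a = x"
  by (cases x) auto

lemma eint_on_cong:
  assumes "\<And>x. x \<in> A \<Longrightarrow> f x = g x"
  shows "eint_on M A f = eint_on M A g"
proof -
  have "(\<integral>\<^sup>+x\<in>A. e2ennreal (f x) \<partial>M) = (\<integral>\<^sup>+x\<in>A. e2ennreal (g x) \<partial>M)"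
    and "(\<integral>\<^sup>+x\<in>A. e2ennreal (- f x) \<partial>M) = (\<integral>\<^sup>+x\<in>A. e2ennreal (- g x) \<partial>M)"
    using assms by (auto intro!: nn_integral_cong split: split_indicator)
  then show ?thesis unfolding eint_on_def by simp
qed

lemma eint_on_add_nonneg:
  fixes g :: "'b \<Rightarrow> real" and h :: "'b \<Rightarrow> ereal"
  assumes A[measurable]: "A \<in> sets M" and g: "integrable M (\<lambda>x. indicator A x * g x)"
    and h[measurable]: "h \<in> borel_measurable M" and h_nonneg: "\<And>x. 0 \<le> h x"
  shows "eint_on M A (\<lambda>x. ereal (g x) + h x)
     = ereal (\<integral>x. indicator A x * g x \<partial>M) + enn2ereal (\<integral>\<^sup>+x\<in>A. e2ennreal (h x) \<partial>M)"
proof -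
  define gA where "gA x = indicator A x * g x" for x
  have gA[measurable]: "gA \<in> borel_measurable M" using g unfolding gA_def by auto
  have hA: "(\<lambda>x. h x * indicator A x) \<in> borel_measurable M" by measurable
  define P where "P = (\<integral>\<^sup>+x\<in>A. e2ennreal (ereal (g x) + h x) \<partial>M)"
  define Q where "Q = (\<integral>\<^sup>+x\<in>A. e2ennreal (- (ereal (g x) + h x)) \<partial>M)"
  define Gp where "Gp = (\<integral>\<^sup>+x. ennreal (gA x) \<partial>M)"
  define Gm where "Gm = (\<integral>\<^sup>+x. ennreal (- gA x) \<partial>M)"
  define Hh where "Hh = (\<integral>\<^sup>+x\<in>A. e2ennreal (h x) \<partial>M)"
  have P_alt: "P = (\<integral>\<^sup>+x. e2ennreal (ereal (gA x) + h x * indicator A x) \<partial>M)"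
    and Q_alt: "Q = (\<integral>\<^sup>+x. e2ennreal (- (ereal (gA x) + h x * indicator A x)) \<partial>M)"
    unfolding P_def Q_def by (auto intro!: nn_integral_cong simp: gA_def split: split_indicator)
  have "P + Gm = (\<integral>\<^sup>+x. e2ennreal (ereal (gA x) + h x * indicator A x) + ennreal (- gA x) \<partial>M)"
    unfolding P_alt Gm_def using hA by (intro nn_integral_add[symmetric]) auto
  also have "\<dots> = (\<integral>\<^sup>+x. e2ennreal (- (ereal (gA x) + h x * indicator A x)) + ennreal (gA x)
      + e2ennreal (h x * indicator A x) \<partial>M)"
    using h_nonneg by (intro nn_integral_cong e2ennreal_add_nonneg_split) (simp split: split_indicator)
  also have "\<dots> = Q + Gp + Hh"
  proof -
    have "e2ennreal (h x * indicator A x) = e2ennreal (h x) * indicator A x" for x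
      by (simp split: split_indicator)
    then show ?thesis
      unfolding Q_alt Gp_def Hh_def using hA
      by (simp add: nn_integral_add nn_integral_set_ennreal mult.commute)
  qed
  finally have sum: "P + Gm = Q + Gp + Hh" .
  have norm_fin: "(\<integral>\<^sup>+x. ennreal (norm (gA x)) \<partial>M) < top"
    using g unfolding integrable_iff_bounded gA_def by simp
  have "Gp < top" unfolding Gp_def
    by (rule le_less_trans[OF nn_integral_mono norm_fin]) (simp add: ennreal_leI)
  moreover have "Gm < top" unfolding Gm_def
    by (rule le_less_trans[OF nn_integral_mono norm_fin]) (simp add: ennreal_leI)
  moreover have "Q \<le> Gm"
  proof -
    have "e2ennreal (- (ereal (g x) + h x)) \<le> e2ennreal (ereal (- g x))" for x
      using h_nonneg[of x] by (intro e2ennreal_mono) (cases "h x"; simp)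
    then show ?thesis
      unfolding Q_def Gm_def nn_integral_set_ennreal
      by (intro nn_integral_mono) (simp add: gA_def split: split_indicator)
  qed
  ultimately have fin: "Q < top" "Gp < top" "Gm < top" by auto
  have "(\<integral>x. gA x \<partial>M) = enn2real Gp - enn2real Gm"
    using real_lebesgue_integral_def[OF g] unfolding Gp_def Gm_def gA_def by simp
  with enn2ereal_diff_eq_of_add_eq[OF sum fin] show ?thesis
    unfolding eint_on_def P_def Q_def Hh_def gA_def by simp
qed

lemma ereal_scaled_le_add_enn2ereal:
  assumes "0 < c"
  shows "ereal (c * x) \<le> ereal c * (ereal x + enn2ereal k)"
    and "ereal (c * x) = ereal c * (ereal x + enn2ereal k) \<longleftrightarrow> k = 0"
proof -
  have "ereal (c * x) \<le> ereal c * (ereal x + enn2ereal k)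
    \<and> (ereal (c * x) = ereal c * (ereal x + enn2ereal k) \<longleftrightarrow> k = 0)"
  proof (cases "k = top")
    case False
    then obtain r where r: "k = ennreal r" "0 \<le> r" using less_top_ennreal top.not_eq_extremum by blast
    then have "ereal c * (ereal x + enn2ereal k) = ereal (c * x + c * r)"
      by (simp add: algebra_simps)
    with r assms show ?thesis by (auto simp: ennreal_eq_0_iff)
  qed (use assms in simp)
  then show "ereal (c * x) \<le> ereal c * (ereal x + enn2ereal k)"
    and "ereal (c * x) = ereal c * (ereal x + enn2ereal k) \<longleftrightarrow> k = 0" by auto
qed

section \<open>Regularity of hamiltonians and paths\<close>

lemma integrable_indicator_continuous:
  fixes f :: "'b::euclidean_space \<Rightarrow> real"
  assumes f: "continuous_on UNIV f" and A: "A \<in> sets borel" and bA: "bounded A"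
  shows "integrable lborel (\<lambda>x. indicator A x * f x)"
proof -
  obtain r x0 where r: "A \<subseteq> cball x0 r" using bA unfolding bounded_subset_cball by blast
  have "compact (f ` cball x0 r)"
    by (rule compact_continuous_image) (auto intro: continuous_on_subset[OF f])
  then have "bounded (f ` cball x0 r)" by (rule compact_imp_bounded)
  then obtain M where M0: "\<forall>y\<in>f ` cball x0 r. norm y \<le> M" unfolding bounded_iff by blast
  have M: "\<And>x. x \<in> cball x0 r \<Longrightarrow> \<bar>f x\<bar> \<le> M" using M0 by simp
  have "integrable lborel (\<lambda>x. M * indicator (cball x0 r) x)"
    using emeasure_bounded_finite[OF bounded_cball]
    by (intro integrable_mult_right integrable_real_indicator) auto
  moreover have "(\<lambda>x. indicator A x * f x) \<in> borel_measurable lborel"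
  proof -
    have [measurable]: "f \<in> borel_measurable borel" by (rule borel_measurable_continuous_onI[OF f])
    show ?thesis using A by measurable
  qed
  moreover have "AE x in lborel. norm (indicator A x * f x) \<le> norm (M * indicator (cball x0 r) x :: real)"
  proof (rule AE_I2)
    fix x
    show "norm (indicator A x * f x) \<le> norm (M * indicator (cball x0 r) x :: real)"
      using M[of x] r by (auto split: split_indicator)
  qed
  ultimately show ?thesis by (rule Bochner_Integration.integrable_bound)
qed

lemma continuous_on_slice_fst: "continuous_on UNIV f \<Longrightarrow> continuous_on UNIV (\<lambda>t. f (t, z))"
  by (rule continuous_on_compose2[of UNIV f]) (auto intro: continuous_intros)

lemma continuous_on_slice_snd: "continuous_on UNIV f \<Longrightarrow> continuous_on UNIV (\<lambda>z. f (t, z))"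
  by (rule continuous_on_compose2[of UNIV f]) (auto intro: continuous_intros)

definition clamp_time :: "real \<Rightarrow> real \<Rightarrow> real" where
  "clamp_time T t = max 0 (min T t)"

lemma clamp_time_eq [simp]: "t \<in> {0..T} \<Longrightarrow> clamp_time T t = t"
  by (auto simp: clamp_time_def)

lemma continuous_on_clamp_time:
  fixes f :: "real \<Rightarrow> 'b::topological_space \<Rightarrow> 'c::topological_space"
  assumes f: "continuous_on ({0..T} \<times> UNIV) (\<lambda>(t, w). f t w)" and q: "continuous_on UNIV q"
    and "0 \<le> T"
  shows "continuous_on UNIV (\<lambda>p. f (clamp_time T (fst p)) (q p))"
proof -
  have "continuous_on UNIV (\<lambda>p. (clamp_time T (fst p), q p))"
    unfolding clamp_time_def by (intro continuous_intros q)
  moreover have "(\<lambda>p. (clamp_time T (fst p), q p)) ` UNIV \<subseteq> {0..T} \<times> UNIV"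
    using \<open>0 \<le> T\<close> by (auto simp: clamp_time_def)
  ultimately have "continuous_on UNIV ((\<lambda>(t, w). f t w) \<circ> (\<lambda>p. (clamp_time T (fst p), q p)))"
    by (rule continuous_on_compose[OF _ continuous_on_subset[OF f]])
  then show ?thesis by (simp add: comp_def)
qed

lemma hamiltonian_C1_continuous:
  assumes "hamiltonian_C1 T H dtH DH"
  shows "continuous_on ({0..T} \<times> UNIV) (\<lambda>(t, w). H t w)"
    and "continuous_on ({0..T} \<times> UNIV) (\<lambda>(t, w). dtH t w)"
    and "continuous_on ({0..T} \<times> UNIV) (\<lambda>(t, w). DH t w)"
proof -
  show "continuous_on ({0..T} \<times> UNIV) (\<lambda>(t, w). H t w)"
    unfolding continuous_on_eq_continuous_within
  proof
    fix x assume "x \<in> {0..T} \<times> (UNIV :: ('a \<times> 'a) set)"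
    with assms show "continuous (at x within {0..T} \<times> UNIV) (\<lambda>(t, w). H t w)"
      unfolding hamiltonian_C1_def by (auto dest!: has_derivative_continuous)
  qed
  show "continuous_on ({0..T} \<times> UNIV) (\<lambda>(t, w). dtH t w)"
    and "continuous_on ({0..T} \<times> UNIV) (\<lambda>(t, w). DH t w)"
    using assms unfolding hamiltonian_C1_def by auto
qed

lemma has_real_derivative_hamiltonian_along_path:
  assumes H_C1: "hamiltonian_C1 T H dtH DH" and path: "paths T F \<Psi> \<Psi>'" and t: "t \<in> {0..T}"
  shows "((\<lambda>s. H s (\<Psi> s z)) has_real_derivative
      dtH t (\<Psi> t z) + dual_pair (DH t (\<Psi> t z)) (\<Psi>' t z)) (at t within {0..T})"
proof -
  have "((\<lambda>s. \<Psi> s z) has_derivative (\<lambda>h. h *\<^sub>R \<Psi>' t z)) (at t within {0..T})"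
    using path t unfolding paths_def has_vector_derivative_def by blast
  then have curve: "((\<lambda>s. (s, \<Psi> s z)) has_derivative (\<lambda>h. (h, h *\<^sub>R \<Psi>' t z))) (at t within {0..T})"
    by (rule has_derivative_Pair[OF has_derivative_ident])
  have H_deriv: "\<And>x. x \<in> {0..T} \<times> UNIV \<Longrightarrow> ((\<lambda>(s, w). H s w) has_derivative
      (\<lambda>(ds, dz). ds * dtH (fst x) (snd x) + dual_pair (DH (fst x) (snd x)) dz)) (at x within {0..T} \<times> UNIV)"
    using H_C1 unfolding hamiltonian_C1_def by auto
  have "((\<lambda>s. (\<lambda>(s, w). H s w) (s, \<Psi> s z)) has_derivative
      (\<lambda>h. (\<lambda>(ds, dz). ds * dtH (fst (t, \<Psi> t z)) (snd (t, \<Psi> t z))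
        + dual_pair (DH (fst (t, \<Psi> t z)) (snd (t, \<Psi> t z))) dz) (h, h *\<^sub>R \<Psi>' t z)))
      (at t within {0..T})"
    by (rule has_derivative_in_compose2[OF H_deriv _ t curve]) auto
  then have "((\<lambda>s. H s (\<Psi> s z)) has_derivative
      (\<lambda>h. h * dtH t (\<Psi> t z) + h * dual_pair (DH t (\<Psi> t z)) (\<Psi>' t z))) (at t within {0..T})"
    by (simp add: dual_pair_scaleR_right)
  then show ?thesis
    unfolding has_field_derivative_def by (rule has_derivative_eq_rhs) (simp add: fun_eq_iff algebra_simps)
qed

section \<open>Energy balance along a path\<close>

locale gibbs_path =
  fixes T \<alpha> \<beta> :: real
    and H dtH :: "real \<Rightarrow> 'a::euclidean_space \<times> 'a \<Rightarrow> real"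
    and DH :: "real \<Rightarrow> 'a \<times> 'a \<Rightarrow> 'a \<times> 'a"
    and \<phi> :: "'a \<times> 'a \<Rightarrow> ereal"
    and F :: "'a \<times> 'a \<Rightarrow> 'a \<times> 'a"
    and \<Psi> \<Psi>' :: "real \<Rightarrow> 'a \<times> 'a \<Rightarrow> 'a \<times> 'a"
    and B :: "('a \<times> 'a) set"
  assumes T_pos: "0 < T"
    and beta_pos: "0 < \<beta>"
    and H_C1: "hamiltonian_C1 T H dtH DH"
    and phi_lsc: "ereal_lsc \<phi>"
    and phi_not_minf: "\<And>z. \<phi> z \<noteq> - \<infinity>"
    and path: "paths T F \<Psi> \<Psi>'"
    and path_reg: "path_regular T \<Psi> \<Psi>'"
    and B_borel: "B \<in> sets borel"
    and B_bounded: "bounded B"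
begin

text \<open>The quantities below are functions of \<open>(t, z)\<close> with time clamped to \<open>[0, T]\<close>: this makes
  them continuous on all of \<open>\<real> \<times> N\<close>, hence Borel, without changing them on \<open>[0, T] \<times> N\<close>.\<close>

definition path_point :: "real \<times> ('a \<times> 'a) \<Rightarrow> 'a \<times> 'a" where
  "path_point p = \<Psi> (clamp_time T (fst p)) (snd p)"

definition path_velocity :: "real \<times> ('a \<times> 'a) \<Rightarrow> 'a \<times> 'a" where
  "path_velocity p = \<Psi>' (clamp_time T (fst p)) (snd p)"

definition dissipative_velocity :: "real \<times> ('a \<times> 'a) \<Rightarrow> 'a \<times> 'a" where
  "dissipative_velocity p = path_velocity p - symp_grad DH (clamp_time T (fst p)) (path_point p)"

definition gibbs_weight :: "real \<times> ('a \<times> 'a) \<Rightarrow> real" where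
  "gibbs_weight p = exp (- (\<alpha> + \<beta> * H (clamp_time T (fst p)) (path_point p)))"

definition energy_loss_rate :: "real \<times> ('a \<times> 'a) \<Rightarrow> real" where
  "energy_loss_rate p = - (dtH (clamp_time T (fst p)) (path_point p)
     + dual_pair (DH (clamp_time T (fst p)) (path_point p)) (path_velocity p))"

definition fenchel_gap :: "real \<times> ('a \<times> 'a) \<Rightarrow> ereal" where
  "fenchel_gap p = \<phi> (path_velocity p) + symp_conj \<phi> (dissipative_velocity p)
     - ereal (omega (dissipative_velocity p) (path_velocity p))"

definition work :: real where
  "work = (\<integral>p. indicator ({0..T} \<times> B) p * (energy_loss_rate p * gibbs_weight p) \<partial>(lborel \<Otimes>\<^sub>M lborel))"

definition dissipation_excess :: ennreal where
  "dissipation_excess = (\<integral>\<^sup>+p. ennreal (gibbs_weight p) * e2ennreal (fenchel_gap p)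
     * indicator ({0..T} \<times> B) p \<partial>(lborel \<Otimes>\<^sub>M lborel))"

lemma T_nonneg: "0 \<le> T"
  using T_pos by simp

lemma path_at_ends: "\<Psi> 0 = id" "\<Psi> T = F"
  using path unfolding paths_def by auto

lemma continuous_path_point: "continuous_on UNIV path_point"
  unfolding path_point_def using path_reg
  by (intro continuous_on_clamp_time[OF _ continuous_on_snd[OF continuous_on_id] T_nonneg])
    (simp add: path_regular_def)

lemma continuous_path_velocity: "continuous_on UNIV path_velocity"
  unfolding path_velocity_def using path_reg
  by (intro continuous_on_clamp_time[OF _ continuous_on_snd[OF continuous_on_id] T_nonneg])
    (simp add: path_regular_def)

lemma continuous_on_clamp_time_path_point:
  assumes "continuous_on ({0..T} \<times> UNIV) (\<lambda>(t, w). f t w)"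
  shows "continuous_on UNIV (\<lambda>p. f (clamp_time T (fst p)) (path_point p))"
  by (rule continuous_on_clamp_time[OF assms continuous_path_point T_nonneg])

lemma continuous_gibbs_weight: "continuous_on UNIV gibbs_weight"
  unfolding gibbs_weight_def
  by (intro continuous_intros continuous_on_clamp_time_path_point hamiltonian_C1_continuous(1)[OF H_C1])

lemma continuous_dissipative_velocity: "continuous_on UNIV dissipative_velocity"
  unfolding dissipative_velocity_def symp_grad_def Jstar_def
  by (intro continuous_intros continuous_on_clamp_time_path_point continuous_path_velocity
      hamiltonian_C1_continuous(3)[OF H_C1])

lemma continuous_energy_loss_rate: "continuous_on UNIV energy_loss_rate"
  unfolding energy_loss_rate_def dual_pair_def
  by (intro continuous_intros continuous_on_clamp_time_path_point continuous_path_velocity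
      hamiltonian_C1_continuous(2,3)[OF H_C1])

lemma borel_measurable_fenchel_gap [measurable]: "fenchel_gap \<in> borel_measurable borel"
proof -
  have "(\<lambda>p. \<phi> (path_velocity p)) \<in> borel_measurable borel"
    "(\<lambda>p. symp_conj \<phi> (dissipative_velocity p)) \<in> borel_measurable borel"
    by (intro measurable_compose[OF borel_measurable_continuous_onI[OF continuous_path_velocity]]
        measurable_compose[OF borel_measurable_continuous_onI[OF continuous_dissipative_velocity]]
        borel_measurable_ereal_lsc phi_lsc ereal_lsc_symp_conj)+
  moreover have "(\<lambda>p. omega (dissipative_velocity p) (path_velocity p)) \<in> borel_measurable borel"
    unfolding omega_def dual_pair_def Jmap_def
    by (intro borel_measurable_continuous_onI continuous_intros
        continuous_dissipative_velocity continuous_path_velocity)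
  ultimately show ?thesis unfolding fenchel_gap_def by measurable
qed

lemma fenchel_gap_nonneg: "0 \<le> fenchel_gap p"
proof -
  have "ereal (omega (dissipative_velocity p) (path_velocity p))
      \<le> \<phi> (path_velocity p) + symp_conj \<phi> (dissipative_velocity p)"
    by (rule symp_fenchel_ineq[of \<phi>, OF phi_not_minf])
  then show ?thesis
    unfolding fenchel_gap_def
    by (cases "\<phi> (path_velocity p) + symp_conj \<phi> (dissipative_velocity p)") auto
qed

lemma gibbs_weight_pos [simp]: "0 < gibbs_weight p"
  by (simp add: gibbs_weight_def)

lemma path_point_at [simp]: "t \<in> {0..T} \<Longrightarrow> path_point (t, z) = \<Psi> t z"
  and path_velocity_at [simp]: "t \<in> {0..T} \<Longrightarrow> path_velocity (t, z) = \<Psi>' t z"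
  by (simp_all add: path_point_def path_velocity_def)

lemma gibbs_along_path:
  "t \<in> {0..T} \<Longrightarrow> gibbs H \<alpha> \<beta> t (\<Psi> t) = density lborel (\<lambda>z. ennreal (gibbs_weight (t, z)))"
  by (simp add: gibbs_def gibbs_weight_def)

lemma emeasure_gibbs_weight:
  "emeasure (density lborel (\<lambda>z. ennreal (gibbs_weight (t, z)))) B
     = ennreal (\<integral>z. indicator B z * gibbs_weight (t, z) \<partial>lborel)"
proof -
  have "(\<lambda>z. gibbs_weight (t, z)) \<in> borel_measurable borel"
    by (intro borel_measurable_continuous_onI continuous_on_slice_snd continuous_gibbs_weight)
  then have "emeasure (density lborel (\<lambda>z. ennreal (gibbs_weight (t, z)))) B
      = (\<integral>\<^sup>+z. ennreal (indicator B z * gibbs_weight (t, z)) \<partial>lborel)"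
    using B_borel by (simp add: emeasure_density mult.commute flip: indicator_mult_ennreal)
  also have "\<dots> = ennreal (\<integral>z. indicator B z * gibbs_weight (t, z) \<partial>lborel)"
    by (intro nn_integral_eq_integral integrable_indicator_continuous B_borel B_bounded
        continuous_on_slice_snd continuous_gibbs_weight) (auto simp: less_imp_le)
  finally show ?thesis .
qed

lemma integral_gibbs_weight_derivative:
  "(LINT t:{0..T}|lborel. \<beta> * energy_loss_rate (t, z) * gibbs_weight (t, z))
     = gibbs_weight (T, z) - gibbs_weight (0, z)"
proof -
  have deriv: "((\<lambda>s. exp (- (\<alpha> + \<beta> * H s (\<Psi> s z)))) has_vector_derivative
      \<beta> * energy_loss_rate (t, z) * gibbs_weight (t, z)) (at t within {0..T})"
    if t: "t \<in> {0..T}" for t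
  proof -
    note dH = has_real_derivative_hamiltonian_along_path[OF H_C1 path t, of z]
    have "((\<lambda>s. exp (- (\<alpha> + \<beta> * H s (\<Psi> s z)))) has_real_derivative
        exp (- (\<alpha> + \<beta> * H t (\<Psi> t z)))
          * - (0 + \<beta> * (dtH t (\<Psi> t z) + dual_pair (DH t (\<Psi> t z)) (\<Psi>' t z)))) (at t within {0..T})"
      by (rule DERIV_chain'[OF DERIV_minus[OF DERIV_add[OF DERIV_const DERIV_cmult[OF dH]]] DERIV_exp])
    moreover have "\<beta> * energy_loss_rate (t, z) * gibbs_weight (t, z) = exp (- (\<alpha> + \<beta> * H t (\<Psi> t z)))
        * - (0 + \<beta> * (dtH t (\<Psi> t z) + dual_pair (DH t (\<Psi> t z)) (\<Psi>' t z)))"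
      using t by (simp add: energy_loss_rate_def gibbs_weight_def algebra_simps)
    ultimately show ?thesis by (simp only: has_real_derivative_iff_has_vector_derivative)
  qed
  have "((\<lambda>t. \<beta> * energy_loss_rate (t, z) * gibbs_weight (t, z)) has_integral
      exp (- (\<alpha> + \<beta> * H T (\<Psi> T z))) - exp (- (\<alpha> + \<beta> * H 0 (\<Psi> 0 z)))) {0..T}"
    by (rule fundamental_theorem_of_calculus[OF T_nonneg deriv])
  then have "integral {0..T} (\<lambda>t. \<beta> * energy_loss_rate (t, z) * gibbs_weight (t, z))
      = gibbs_weight (T, z) - gibbs_weight (0, z)"
    using T_nonneg by (simp add: integral_unique gibbs_weight_def)
  moreover have "continuous_on UNIV (\<lambda>t. \<beta> * energy_loss_rate (t, z) * gibbs_weight (t, z))"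
    by (intro continuous_on_mult continuous_on_const continuous_on_slice_fst[OF continuous_energy_loss_rate]
        continuous_on_slice_fst[OF continuous_gibbs_weight])
  then have "set_integrable lborel {0..T} (\<lambda>t. \<beta> * energy_loss_rate (t, z) * gibbs_weight (t, z))"
    by (rule borel_integrable_atLeastAtMost'[OF continuous_on_subset]) simp
  ultimately show ?thesis
    by (simp add: set_borel_integral_eq_integral(2))
qed

lemma time_slab_borel: "{0..T} \<times> B \<in> sets (lborel \<Otimes>\<^sub>M lborel)"
  using B_borel by (intro pair_measureI) auto

lemma integrable_work_integrand:
  "integrable (lborel \<Otimes>\<^sub>M lborel)
     (\<lambda>p. indicator ({0..T} \<times> B) p * (energy_loss_rate p * gibbs_weight p))"
  using time_slab_borel
  unfolding lborel_prod
  by (intro integrable_indicator_continuous continuous_on_mult continuous_energy_loss_rate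
      continuous_gibbs_weight bounded_Times bounded_closed_interval B_bounded) simp_all

lemma gibbs_increase_eq_work:
  "enn2ereal (emeasure (gibbs H \<alpha> \<beta> T F) B) - enn2ereal (emeasure (gibbs H \<alpha> \<beta> 0 id) B)
     = ereal (\<beta> * work)"
proof -
  define w where "w t = (\<lambda>z. indicator B z * gibbs_weight (t, z))" for t
  have int_w: "integrable lborel (w t)" for t
    unfolding w_def by (intro integrable_indicator_continuous B_borel B_bounded
        continuous_on_slice_snd[OF continuous_gibbs_weight])
  have "0 \<le> integral\<^sup>L lborel (w t)" for t
    unfolding w_def by (intro integral_nonneg_AE) (simp add: less_imp_le)
  then have "enn2ereal (emeasure (gibbs H \<alpha> \<beta> T F) B) - enn2ereal (emeasure (gibbs H \<alpha> \<beta> 0 id) B)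
      = ereal (integral\<^sup>L lborel (w T) - integral\<^sup>L lborel (w 0))"
    using T_nonneg gibbs_along_path[of T] gibbs_along_path[of 0]
    by (simp add: path_at_ends emeasure_gibbs_weight w_def)
  also have "integral\<^sup>L lborel (w T) - integral\<^sup>L lborel (w 0)
      = (\<integral>z. \<integral>t. indicator ({0..T} \<times> B) (t, z) * (\<beta> * energy_loss_rate (t, z) * gibbs_weight (t, z)) \<partial>lborel \<partial>lborel)"
  proof -
    have "w T z - w 0 z = (\<integral>t. indicator ({0..T} \<times> B) (t, z)
        * (\<beta> * energy_loss_rate (t, z) * gibbs_weight (t, z)) \<partial>lborel)" for z
      using integral_gibbs_weight_derivative[of z]
      by (cases "z \<in> B") (simp_all add: w_def indicator_times set_lebesgue_integral_def)
    then show ?thesis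
      unfolding Bochner_Integration.integral_diff[OF int_w int_w, symmetric] by simp
  qed
  also have "\<dots> = \<beta> * work"
  proof -
    define f where "f p = indicator ({0..T} \<times> B) p * (energy_loss_rate p * gibbs_weight p)" for p
    have "integrable (lborel \<Otimes>\<^sub>M lborel) f"
      using integrable_work_integrand by (simp add: f_def[abs_def])
    then have "(\<integral>z. \<integral>t. f (t, z) \<partial>lborel \<partial>lborel) = integral\<^sup>L (lborel \<Otimes>\<^sub>M lborel) f"
      using lborel_pair.integral_snd[of "curry f"] by simp
    then show ?thesis by (simp add: f_def[abs_def] work_def ac_simps)
  qed
  finally show ?thesis .
qed

lemma cost_integrand_eq:
  assumes t: "t \<in> {0..T}"
  shows "\<phi> (\<Psi>' t z) + symp_conj \<phi> (\<Psi>' t z - symp_grad DH t (\<Psi> t z)) - ereal (dtH t (\<Psi> t z))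
    = ereal (energy_loss_rate (t, z)) + fenchel_gap (t, z)"
proof -
  define X where "X = \<phi> (\<Psi>' t z) + symp_conj \<phi> (\<Psi>' t z - symp_grad DH t (\<Psi> t z))"
  have gap: "fenchel_gap (t, z) = X - ereal (- dual_pair (DH t (\<Psi> t z)) (\<Psi>' t z))"
    using t by (simp add: X_def fenchel_gap_def dissipative_velocity_def omega_diff_symp_grad)
  have "X \<noteq> - \<infinity>"
    using fenchel_gap_nonneg[of "(t, z)"] unfolding gap by auto
  then show ?thesis
    unfolding X_def[symmetric] gap using t by (cases X) (simp_all add: energy_loss_rate_def)
qed

lemma eint_cost_at_time:
  assumes t: "t \<in> {0..T}"
  shows "eint_on (gibbs H \<alpha> \<beta> t (\<Psi> t)) B
      (\<lambda>z. \<phi> (\<Psi>' t z) + symp_conj \<phi> (\<Psi>' t z - symp_grad DH t (\<Psi> t z)) - ereal (dtH t (\<Psi> t z)))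
    = ereal (\<integral>z. indicator ({0..T} \<times> B) (t, z) * (energy_loss_rate (t, z) * gibbs_weight (t, z)) \<partial>lborel)
      + enn2ereal (\<integral>\<^sup>+z. ennreal (gibbs_weight (t, z)) * e2ennreal (fenchel_gap (t, z))
          * indicator ({0..T} \<times> B) (t, z) \<partial>lborel)"
proof -
  let ?M = "density lborel (\<lambda>z. ennreal (gibbs_weight (t, z)))"
  have weight[measurable]: "(\<lambda>z. gibbs_weight (t, z)) \<in> borel_measurable borel"
    by (intro borel_measurable_continuous_onI continuous_on_slice_snd continuous_gibbs_weight)
  have rate[measurable]: "(\<lambda>z. energy_loss_rate (t, z)) \<in> borel_measurable borel"
    by (intro borel_measurable_continuous_onI continuous_on_slice_snd continuous_energy_loss_rate)
  have "integrable lborel (\<lambda>z. indicator B z * (energy_loss_rate (t, z) * gibbs_weight (t, z)))"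
    by (intro integrable_indicator_continuous B_borel B_bounded continuous_on_slice_snd
        continuous_on_mult continuous_energy_loss_rate continuous_gibbs_weight)
  then have "integrable ?M (\<lambda>z. indicator B z * energy_loss_rate (t, z))"
    using B_borel by (subst integrable_density) (auto simp: ac_simps less_imp_le)
  then have "eint_on ?M B (\<lambda>z. ereal (energy_loss_rate (t, z)) + fenchel_gap (t, z))
      = ereal (\<integral>z. indicator B z * energy_loss_rate (t, z) \<partial>?M)
        + enn2ereal (\<integral>\<^sup>+z\<in>B. e2ennreal (fenchel_gap (t, z)) \<partial>?M)"
    using B_borel fenchel_gap_nonneg by (intro eint_on_add_nonneg) auto
  also have "(\<integral>z. indicator B z * energy_loss_rate (t, z) \<partial>?M)
      = (\<integral>z. indicator ({0..T} \<times> B) (t, z) * (energy_loss_rate (t, z) * gibbs_weight (t, z)) \<partial>lborel)"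
    using B_borel t by (subst integral_density) (auto simp: indicator_times ac_simps less_imp_le)
  also have "(\<integral>\<^sup>+z\<in>B. e2ennreal (fenchel_gap (t, z)) \<partial>?M)
      = (\<integral>\<^sup>+z. ennreal (gibbs_weight (t, z)) * e2ennreal (fenchel_gap (t, z))
          * indicator ({0..T} \<times> B) (t, z) \<partial>lborel)"
    using B_borel t by (subst nn_integral_density) (auto simp: indicator_times ac_simps)
  finally show ?thesis
    unfolding gibbs_along_path[OF t] using t by (simp add: cost_integrand_eq cong: eint_on_cong)
qed

lemma cost_eq_work_plus_excess:
  "cost T H dtH DH \<phi> \<alpha> \<beta> \<Psi> \<Psi>' B = ereal work + enn2ereal dissipation_excess"
proof -
  define f where "f = (\<lambda>p. indicator ({0..T} \<times> B) p * (energy_loss_rate p * gibbs_weight p))"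
  define g where "g = (\<lambda>p. ennreal (gibbs_weight p) * e2ennreal (fenchel_gap p) * indicator ({0..T} \<times> B) p)"
  have f_int: "integrable (lborel \<Otimes>\<^sub>M lborel) f"
    unfolding f_def by (rule integrable_work_integrand)
  have g_meas[measurable]: "g \<in> borel_measurable (lborel \<Otimes>\<^sub>M lborel)"
    using time_slab_borel borel_measurable_continuous_onI[OF continuous_gibbs_weight]
    unfolding g_def lborel_prod by measurable
  define G where "G t = (\<integral>z. f (t, z) \<partial>lborel)" for t
  define N where "N t = (\<integral>\<^sup>+z. g (t, z) \<partial>lborel)" for t
  have G_restricted: "(\<lambda>t. indicator {0..T} t * G t) = G"
    by (auto simp: G_def f_def indicator_times split: split_indicator)
  have "cost T H dtH DH \<phi> \<alpha> \<beta> \<Psi> \<Psi>' B = eint_on lborel {0..T} (\<lambda>t. ereal (G t) + enn2ereal (N t))"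
    unfolding cost_def G_def N_def f_def g_def by (rule eint_on_cong) (rule eint_cost_at_time)
  also have "\<dots> = ereal (\<integral>t. indicator {0..T} t * G t \<partial>lborel)
      + enn2ereal (\<integral>\<^sup>+t\<in>{0..T}. e2ennreal (enn2ereal (N t)) \<partial>lborel)"
  proof (rule eint_on_add_nonneg)
    show "integrable lborel (\<lambda>t. indicator {0..T} t * G t)"
      using lborel_pair.integrable_fst'[OF f_int] unfolding G_restricted by (simp add: G_def[abs_def])
    show "(\<lambda>t. enn2ereal (N t)) \<in> borel_measurable lborel"
      unfolding N_def using lborel.borel_measurable_nn_integral[of "curry g"] by simp
  qed auto
  also have "(\<integral>t. indicator {0..T} t * G t \<partial>lborel) = work"
    using lborel_pair.integral_fst'[OF f_int] unfolding G_restricted by (simp add: G_def[abs_def] f_def work_def)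
  also have "(\<integral>\<^sup>+t\<in>{0..T}. e2ennreal (enn2ereal (N t)) \<partial>lborel) = dissipation_excess"
  proof -
    have "(\<integral>\<^sup>+t\<in>{0..T}. e2ennreal (enn2ereal (N t)) \<partial>lborel) = (\<integral>\<^sup>+t. N t \<partial>lborel)"
      by (auto intro!: nn_integral_cong simp: N_def g_def indicator_times split: split_indicator)
    also have "\<dots> = integral\<^sup>N (lborel \<Otimes>\<^sub>M lborel) g"
      unfolding N_def by (rule lborel.nn_integral_fst[OF g_meas])
    finally show ?thesis unfolding dissipation_excess_def g_def .
  qed
  finally show ?thesis .
qed

lemma dissipation_excess_eq_0_iff:
  "dissipation_excess = 0 \<longleftrightarrow>
    (AE p in lborel \<Otimes>\<^sub>M lborel. fst p \<in> {0..T} \<longrightarrow> snd p \<in> B \<longrightarrow>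
      ereal (omega (\<Psi>' (fst p) (snd p) - symp_grad DH (fst p) (\<Psi> (fst p) (snd p))) (\<Psi>' (fst p) (snd p)))
      = \<phi> (\<Psi>' (fst p) (snd p)) + symp_conj \<phi> (\<Psi>' (fst p) (snd p) - symp_grad DH (fst p) (\<Psi> (fst p) (snd p))))"
proof -
  have pointwise: "ennreal (gibbs_weight p) * e2ennreal (fenchel_gap p) * indicator ({0..T} \<times> B) p = 0
    \<longleftrightarrow> (fst p \<in> {0..T} \<longrightarrow> snd p \<in> B \<longrightarrow>
      ereal (omega (\<Psi>' (fst p) (snd p) - symp_grad DH (fst p) (\<Psi> (fst p) (snd p))) (\<Psi>' (fst p) (snd p)))
      = \<phi> (\<Psi>' (fst p) (snd p)) + symp_conj \<phi> (\<Psi>' (fst p) (snd p) - symp_grad DH (fst p) (\<Psi> (fst p) (snd p))))"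
    for p
  proof (cases "p \<in> {0..T} \<times> B")
    case True
    have "e2ennreal (fenchel_gap p) = 0 \<longleftrightarrow> fenchel_gap p = 0"
      using fenchel_gap_nonneg[of p] by (cases "fenchel_gap p") (auto simp: ennreal_eq_0_iff)
    moreover have "fenchel_gap p = 0 \<longleftrightarrow>
      ereal (omega (\<Psi>' (fst p) (snd p) - symp_grad DH (fst p) (\<Psi> (fst p) (snd p))) (\<Psi>' (fst p) (snd p)))
      = \<phi> (\<Psi>' (fst p) (snd p)) + symp_conj \<phi> (\<Psi>' (fst p) (snd p) - symp_grad DH (fst p) (\<Psi> (fst p) (snd p)))"
      using True unfolding fenchel_gap_def dissipative_velocity_def
      by (cases p) (simp add: ereal_diff_eq_0_iff)
    moreover have "ennreal (gibbs_weight p) \<noteq> 0"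
      by (simp add: ennreal_eq_0_iff not_le)
    ultimately show ?thesis using True by auto
  qed (auto simp: mem_Times_iff)
  have "(\<lambda>p. ennreal (gibbs_weight p) * e2ennreal (fenchel_gap p) * indicator ({0..T} \<times> B) p)
      \<in> borel_measurable (lborel \<Otimes>\<^sub>M lborel)"
    using time_slab_borel borel_measurable_continuous_onI[OF continuous_gibbs_weight]
    unfolding lborel_prod by measurable
  then show ?thesis
    unfolding dissipation_excess_def by (simp only: nn_integral_0_iff_AE pointwise)
qed

lemma gibbs_increase_le_cost:
  "enn2ereal (emeasure (gibbs H \<alpha> \<beta> T F) B) - enn2ereal (emeasure (gibbs H \<alpha> \<beta> 0 id) B) \<le> ereal \<beta> * cost T H dtH DH \<phi> \<alpha> \<beta> \<Psi> \<Psi>' B"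
  unfolding gibbs_increase_eq_work cost_eq_work_plus_excess
  by (rule ereal_scaled_le_add_enn2ereal(1)[OF beta_pos])

lemma gibbs_increase_eq_cost_iff_fenchel_eq:
  "enn2ereal (emeasure (gibbs H \<alpha> \<beta> T F) B) - enn2ereal (emeasure (gibbs H \<alpha> \<beta> 0 id) B) = ereal \<beta> * cost T H dtH DH \<phi> \<alpha> \<beta> \<Psi> \<Psi>' B \<longleftrightarrow>
    (AE p in lborel \<Otimes>\<^sub>M lborel. fst p \<in> {0..T} \<longrightarrow> snd p \<in> B \<longrightarrow>
      ereal (omega (\<Psi>' (fst p) (snd p) - symp_grad DH (fst p) (\<Psi> (fst p) (snd p))) (\<Psi>' (fst p) (snd p)))
      = \<phi> (\<Psi>' (fst p) (snd p)) + symp_conj \<phi> (\<Psi>' (fst p) (snd p) - symp_grad DH (fst p) (\<Psi> (fst p) (snd p))))"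
  unfolding gibbs_increase_eq_work cost_eq_work_plus_excess ereal_scaled_le_add_enn2ereal(2)[OF beta_pos]
  by (rule dissipation_excess_eq_0_iff)

lemma gibbs_increase_eq_cost_iff_subdiff:
  "enn2ereal (emeasure (gibbs H \<alpha> \<beta> T F) B) - enn2ereal (emeasure (gibbs H \<alpha> \<beta> 0 id) B) = ereal \<beta> * cost T H dtH DH \<phi> \<alpha> \<beta> \<Psi> \<Psi>' B \<longleftrightarrow>
    (AE p in lborel \<Otimes>\<^sub>M lborel. fst p \<in> {0..T} \<longrightarrow> snd p \<in> B \<longrightarrow>
      \<Psi>' (fst p) (snd p) - symp_grad DH (fst p) (\<Psi> (fst p) (snd p)) \<in> symp_subdiff \<phi> (\<Psi>' (fst p) (snd p)))"
  unfolding gibbs_increase_eq_cost_iff_fenchel_eq symp_fenchel_eq_iff_subdiff[of \<phi>, OF phi_not_minf] ..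

lemma sben_path_minimises_cost:
  assumes sben: "AE p in lborel \<Otimes>\<^sub>M lborel. fst p \<in> {0..T} \<longrightarrow> snd p \<in> B \<longrightarrow>
      \<Psi>' (fst p) (snd p) - symp_grad DH (fst p) (\<Psi> (fst p) (snd p)) \<in> symp_subdiff \<phi> (\<Psi>' (fst p) (snd p))"
    and other_path: "paths T F \<Psi>2 \<Psi>2'" "path_regular T \<Psi>2 \<Psi>2'"
  shows "cost T H dtH DH \<phi> \<alpha> \<beta> \<Psi> \<Psi>' B \<le> cost T H dtH DH \<phi> \<alpha> \<beta> \<Psi>2 \<Psi>2' B"
proof -
  interpret other: gibbs_path T \<alpha> \<beta> H dtH DH \<phi> F \<Psi>2 \<Psi>2' B
    using T_pos beta_pos H_C1 phi_lsc phi_not_minf other_path B_borel B_bounded by unfold_locales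
  have "work = other.work"
    using gibbs_increase_eq_work other.gibbs_increase_eq_work beta_pos by simp
  moreover have "dissipation_excess = 0"
    using sben dissipation_excess_eq_0_iff by (simp add: symp_fenchel_eq_iff_subdiff[of \<phi>, OF phi_not_minf])
  moreover have "ereal other.work \<le> ereal other.work + enn2ereal other.dissipation_excess"
    using enn2ereal_nonneg[of other.dissipation_excess]
    by (cases "enn2ereal other.dissipation_excess") auto
  ultimately show ?thesis
    unfolding cost_eq_work_plus_excess other.cost_eq_work_plus_excess
    by (simp add: zero_ennreal.rep_eq)
qed

end

theorem theorem3p1:

  fixes T \<alpha> \<beta> :: real
    and H dtH :: "real \<Rightarrow> 'a::euclidean_space \<times> 'a \<Rightarrow> real"
    and DH :: "real \<Rightarrow> 'a \<times> 'a \<Rightarrow> 'a \<times> 'a"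
    and \<phi> :: "'a \<times> 'a \<Rightarrow> ereal"
    and F :: "'a \<times> 'a \<Rightarrow> 'a \<times> 'a"
    and \<Psi> \<Psi>' :: "real \<Rightarrow> 'a \<times> 'a \<Rightarrow> 'a \<times> 'a"
    and B :: "('a \<times> 'a) set"
  assumes T_pos: "0 < T"
    and beta_pos: "0 < \<beta>"
    and H_C1: "hamiltonian_C1 T H dtH DH"
    and phi_convex: "ereal_convex \<phi>"
    and phi_lsc: "ereal_lsc \<phi>"
    and phi_not_minf: "\<forall>z. \<phi> z \<noteq> - \<infinity>"
    and Psi_path: "paths T F \<Psi> \<Psi>'"
    and Psi_reg: "path_regular T \<Psi> \<Psi>'"
    and B_borel: "B \<in> sets borel"
    and B_bounded: "bounded B"
  shows
    "enn2ereal (emeasure (gibbs H \<alpha> \<beta> T F) B) - enn2ereal (emeasure (gibbs H \<alpha> \<beta> 0 id) B)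
       \<le> ereal \<beta> * cost T H dtH DH \<phi> \<alpha> \<beta> \<Psi> \<Psi>' B
   \<and> (cost T H dtH DH \<phi> \<alpha> \<beta> \<Psi> \<Psi>' B < \<infinity> \<longrightarrow>
       ((enn2ereal (emeasure (gibbs H \<alpha> \<beta> T F) B) - enn2ereal (emeasure (gibbs H \<alpha> \<beta> 0 id) B)
           = ereal \<beta> * cost T H dtH DH \<phi> \<alpha> \<beta> \<Psi> \<Psi>' B)
        \<longleftrightarrow> (AE p in (lborel \<Otimes>\<^sub>M lborel). fst p \<in> {0..T} \<longrightarrow> snd p \<in> B \<longrightarrow>
              ereal (omega (\<Psi>' (fst p) (snd p) - symp_grad DH (fst p) (\<Psi> (fst p) (snd p)))
                           (\<Psi>' (fst p) (snd p)))
              = \<phi> (\<Psi>' (fst p) (snd p))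
                + symp_conj \<phi> (\<Psi>' (fst p) (snd p) - symp_grad DH (fst p) (\<Psi> (fst p) (snd p)))))
     \<and> ((enn2ereal (emeasure (gibbs H \<alpha> \<beta> T F) B) - enn2ereal (emeasure (gibbs H \<alpha> \<beta> 0 id) B)
           = ereal \<beta> * cost T H dtH DH \<phi> \<alpha> \<beta> \<Psi> \<Psi>' B)
        \<longleftrightarrow> (AE p in (lborel \<Otimes>\<^sub>M lborel). fst p \<in> {0..T} \<longrightarrow> snd p \<in> B \<longrightarrow>
              \<Psi>' (fst p) (snd p) - symp_grad DH (fst p) (\<Psi> (fst p) (snd p))
                \<in> symp_subdiff \<phi> (\<Psi>' (fst p) (snd p)))))
   \<and> (\<forall>\<Psi>2 \<Psi>2'. paths T F \<Psi>2 \<Psi>2' \<and> path_regular T \<Psi>2 \<Psi>2'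
        \<and> (AE p in (lborel \<Otimes>\<^sub>M lborel). fst p \<in> {0..T} \<longrightarrow> snd p \<in> B \<longrightarrow>
              \<Psi>2' (fst p) (snd p) - symp_grad DH (fst p) (\<Psi>2 (fst p) (snd p))
                \<in> symp_subdiff \<phi> (\<Psi>2' (fst p) (snd p)))
        \<longrightarrow> (\<forall>\<Psi>3 \<Psi>3'. paths T F \<Psi>3 \<Psi>3' \<and> path_regular T \<Psi>3 \<Psi>3' \<longrightarrow>
              cost T H dtH DH \<phi> \<alpha> \<beta> \<Psi>2 \<Psi>2' B \<le> cost T H dtH DH \<phi> \<alpha> \<beta> \<Psi>3 \<Psi>3' B))"
proof -
  \<comment> \<open>The locale predicate has no argument \<open>\<alpha>\<close>, which
    occurs in none of its assumptions.\<close>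
  have gibbs_path: "gibbs_path T \<beta> H dtH DH \<phi> F \<Psi>1 \<Psi>1' B"
    if "paths T F \<Psi>1 \<Psi>1'" and "path_regular T \<Psi>1 \<Psi>1'" for \<Psi>1 \<Psi>1'
    using assms that by unfold_locales auto
  note path = gibbs_path[OF Psi_path Psi_reg]
  show ?thesis
    using gibbs_path.gibbs_increase_le_cost[OF path] gibbs_path.gibbs_increase_eq_cost_iff_fenchel_eq[OF path]
      gibbs_path.gibbs_increase_eq_cost_iff_subdiff[OF path] gibbs_path.sben_path_minimises_cost[OF gibbs_path]
    by blast
qed

end
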